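(* Let $P=P(m_1,\dots,m_{n-1})$ be a natural unit interval order on $[n]$, let $C$ be its Catalan path, and let $r$ be the bounce number of $C$. Write $X_{\mathrm{inc}(P)}(\mathbf{x},t)=\sum_{\lambda\vdash n}B_\lambda(t)s_\lambda$. Then $B_\lambda(t)=0$ for every partition $\lambda=(\lambda_1,\dots,\lambda_k)$ with $\lambda_1>r$.
   Context: A natural unit interval order $P(m_1,\dots,m_{n-1})$ is defined for integers $m_1\le m_2\le\cdots\le m_{n-1}\le n$ with $m_i\ge i$ for all $i$: it is the poset on $[n]$ with $i<_P j$ iff $i<n$ and $j\in\{m_i+1,\dots,n\}$. Its incomparability graph $\mathrm{inc}(P)$ has vertex set $[n]$ and an edge $\{i,j\}$ ($i<j$) iff $j\le m_i$. For a graph $G$ with vertex set $V\subset\mathbb{P}$, the chromatic quasisymmetric function is $X_G(\mathbf{x},t)=\sum_\kappa t^{\mathrm{asc}(\kappa)}\mathbf{x}_\kappa$, summed over proper colorings $\kappa:V\to\mathbb{P}$, where $\mathbf{x}_\kappa=\prod_{v\in V}x_{\kappa(v)}$ and $\mathrm{asc}(\kappa)$ is the number of edges $\{i,j\}$ with $i<j$ and $\kappa(i)<\kappa(j)$; for natural unit interval orders the coefficient of each $t^i$ is a symmetric function, and $s_\lambda$ denotes the Schur function. The Catalan path of $P$ is the lattice path from $(0,0)$ to $(n,n)$ with unit north and east steps whose $i$-th east step lies on the line $y=m_i$ for $i=1,\dots,n-1$ and whose last east step lies on $y=n$. The bounce path of a Catalan path $C$: start at $(0,0)$, travel north along $C$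 until reaching the beginning of an east step of $C$, then travel east until hitting the diagonal $y=x$, then north until again reaching the beginning of an east step of $C$, then east to the diagonal, and so on, until reaching $(n,n)$. The bounce number of $C$ is one less than the number of points at which the bounce path meets the line $y=x$. *)

theory Defs
  imports Main "HOL-Library.FuncSet" "HOL-Computational_Algebra.Polynomial"
begin

text \<open>Natural unit interval order P(m_1,...,m_{n-1}) on [n] = {1..n}:
  m is given as a function nat => nat, only the values m 1, ..., m (n-1) matter.\<close>
definition nuio :: "nat \<Rightarrow> (nat \<Rightarrow> nat) \<Rightarrow> bool" where
  "nuio n m \<longleftrightarrow> 1 \<le> n \<and>
     (\<forall>i. 1 \<le> i \<and> i \<le> n - 1 \<longrightarrow> i \<le> m i \<and> m i \<le> n) \<and>
     (\<forall>i. 1 \<le> i \<and> i < n - 1 \<longrightarrow> m i \<le> m (Suc i))"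

definition nuio_less :: "nat \<Rightarrow> (nat \<Rightarrow> nat) \<Rightarrow> nat \<Rightarrow> nat \<Rightarrow> bool" where
  "nuio_less n m i j \<longleftrightarrow> i < n \<and> m i < j \<and> j \<le> n"

definition inc_edge :: "nat \<Rightarrow> (nat \<Rightarrow> nat) \<Rightarrow> nat \<Rightarrow> nat \<Rightarrow> bool" where
  "inc_edge n m i j \<longleftrightarrow> 1 \<le> i \<and> i < j \<and> j \<le> n \<and> j \<le> m i"

definition proper_coloring :: "nat \<Rightarrow> (nat \<Rightarrow> nat) \<Rightarrow> (nat \<Rightarrow> nat) \<Rightarrow> bool" where
  "proper_coloring n m \<kappa> \<longleftrightarrow> \<kappa> \<in> {1..n} \<rightarrow>\<^sub>E UNIV \<and> (\<forall>v\<in>{1..n}. 1 \<le> \<kappa> v) \<and>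
     (\<forall>i j. inc_edge n m i j \<longrightarrow> \<kappa> i \<noteq> \<kappa> j)"

definition asc :: "nat \<Rightarrow> (nat \<Rightarrow> nat) \<Rightarrow> (nat \<Rightarrow> nat) \<Rightarrow> nat" where
  "asc n m \<kappa> = card {(i, j). inc_edge n m i j \<and> \<kappa> i < \<kappa> j}"

text \<open>Coefficient of t^k x^alpha in X_{inc(P)}(x,t), where x^alpha = prod_c x_c^(alpha c).\<close>
definition chrom_coeff :: "nat \<Rightarrow> (nat \<Rightarrow> nat) \<Rightarrow> (nat \<Rightarrow> nat) \<Rightarrow> nat \<Rightarrow> nat" where
  "chrom_coeff n m \<alpha> k = card {\<kappa>. proper_coloring n m \<kappa> \<and>
      (\<forall>c. card {v\<in>{1..n}. \<kappa> v = c} = \<alpha> c) \<and> asc n m \<kappa> = k}"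

definition is_partition_of :: "nat \<Rightarrow> nat list \<Rightarrow> bool" where
  "is_partition_of n la \<longleftrightarrow> sorted_wrt (\<ge>) la \<and> (\<forall>p\<in>set la. 0 < p) \<and> sum_list la = n"

definition cells :: "nat list \<Rightarrow> (nat \<times> nat) set" where
  "cells la = {(i, j). i < length la \<and> j < la ! i}"

definition ssyt :: "nat list \<Rightarrow> (nat \<times> nat \<Rightarrow> nat) \<Rightarrow> bool" where
  "ssyt la T \<longleftrightarrow> T \<in> cells la \<rightarrow>\<^sub>E UNIV \<and> (\<forall>x\<in>cells la. 1 \<le> T x) \<and>
     (\<forall>i j. (i, Suc j) \<in> cells la \<longrightarrow> T (i, j) \<le> T (i, Suc j)) \<and>
     (\<forall>i j. (Suc i, j) \<in> cells la \<longrightarrow> T (i, j) < T (Suc i, j))"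

text \<open>Coefficient of x^alpha in the Schur function s_lambda (Kostka number).\<close>
definition schur_coeff :: "nat list \<Rightarrow> (nat \<Rightarrow> nat) \<Rightarrow> nat" where
  "schur_coeff la \<alpha> = card {T. ssyt la T \<and> (\<forall>c. card {x\<in>cells la. T x = c} = \<alpha> c)}"

text \<open>Bounce path: the bounce path meets the diagonal at points (b_k,b_k) with
  b_0 = 0 and b_{k+1} = m_{b_k + 1} (where m_n := n), until b_k = n.\<close>
definition bounce_step :: "nat \<Rightarrow> (nat \<Rightarrow> nat) \<Rightarrow> nat \<Rightarrow> nat" where
  "bounce_step n m b = (if b + 1 \<le> n - 1 then m (b + 1) else n)"

definition bounce_number :: "nat \<Rightarrow> (nat \<Rightarrow> nat) \<Rightarrow> nat" where
  "bounce_number n m = (LEAST k. (bounce_step n m ^^ k) 0 = n)"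

end

theory Submission
  imports Defs
begin

text \<open>First, a colour class of a proper colouring of inc(P) is an
  independent set, i.e. a chain of P; cutting [n] at the points where the bounce path meets the
  diagonal yields r blocks, each a clique of inc(P), so a chain has at most r elements. Hence
  the coefficient of x^\<mu> in X_inc(P) vanishes whenever \<mu>_1 > r. Second, the Kostka matrix
  is unitriangular for dominance order: K_\<lambda>\<mu> \<noteq> 0 forces \<lambda> \<unrhd> \<mu>, and K_\<mu>\<mu> = 1. If
  some B_\<mu> with \<mu>_1 > r were nonzero, take such \<mu> maximal for dominance; comparing
  coefficients of x^\<mu>, every other \<lambda> with K_\<lambda>\<mu> \<noteq> 0 dominates \<mu>, so \<lambda>_1 \<ge> \<mu>_1 > r and
  B_\<lambda> = 0, leaving B_\<mu> K_\<mu>\<mu> = 0.\<close>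

section \<open>Partitions and prefix sums\<close>

lemma length_le_sum_list_pos:
  "\<forall>p\<in>set xs. 0 < (p::nat) \<Longrightarrow> length xs \<le> sum_list xs"
  by (induction xs) auto

lemma prefix_sums_eq_imp_eq:
  fixes xs ys :: "nat list"
  assumes "\<And>i. sum_list (take i xs) = sum_list (take i ys)"
    and "\<forall>p\<in>set xs. 0 < p" and "\<forall>p\<in>set ys. 0 < p"
  shows "xs = ys"
  using assms
proof (induction xs arbitrary: ys)
  case Nil
  then show ?case
    by (cases ys) (auto dest: meta_spec[where x = "Suc 0"])
next
  case (Cons x xs)
  then obtain y ys' where ys: "ys = y # ys'"
    by (cases ys) (auto dest: meta_spec[where x = "Suc 0"])
  have "x = y"
    using Cons.prems(1)[of 1] ys by simp
  moreover have "sum_list (take i xs) = sum_list (take i ys')" for i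
    using Cons.prems(1)[of "Suc i"] ys \<open>x = y\<close> by simp
  ultimately show ?case
    using Cons ys by simp
qed

lemma partition_eq_Nil_iff: "is_partition_of n la \<Longrightarrow> la = [] \<longleftrightarrow> n = 0"
  unfolding is_partition_of_def by (cases la) auto

lemma finite_partitions: "finite {la. is_partition_of n la}"
proof (rule finite_subset)
  show "{la. is_partition_of n la} \<subseteq> {xs. set xs \<subseteq> {1..n} \<and> length xs \<le> n}"
    using member_le_sum_list length_le_sum_list_pos
    by (fastforce simp: is_partition_of_def)
  show "finite {xs. set xs \<subseteq> {1..n} \<and> length xs \<le> n}"
    by (rule finite_lists_length_le) simp
qed

text \<open>A strictly monotone potential for dominance order on partitions of n; since a
  partition of n has at most n parts, prefix sums beyond n carry no information.\<close>
definition prefix_sum_weight :: "nat \<Rightarrow> nat list \<Rightarrow> nat" where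
  "prefix_sum_weight n la = (\<Sum>i\<le>n. sum_list (take i la))"

lemma prefix_sum_weight_strict_mono:
  assumes la: "is_partition_of n la" and mu: "is_partition_of n mu"
    and dom: "\<And>i. sum_list (take i mu) \<le> sum_list (take i la)" and "la \<noteq> mu"
  shows "prefix_sum_weight n mu < prefix_sum_weight n la"
proof -
  have "\<exists>i\<in>{..n}. sum_list (take i mu) < sum_list (take i la)"
  proof (rule ccontr)
    assume "\<not> ?thesis"
    then have small: "sum_list (take i mu) = sum_list (take i la)" if "i \<le> n" for i
      using dom[of i] that by force
    have "length mu \<le> n" "length la \<le> n"
      using la mu length_le_sum_list_pos[of mu] length_le_sum_list_pos[of la]
      by (auto simp: is_partition_of_def)
    then have "sum_list (take i mu) = sum_list (take i la)" for i
      using small[of i] la mu by (cases "i \<le> n") (auto simp: is_partition_of_def)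
    then have "mu = la"
      by (rule prefix_sums_eq_imp_eq) (use la mu in \<open>auto simp: is_partition_of_def\<close>)
    with \<open>la \<noteq> mu\<close> show False by simp
  qed
  then show ?thesis
    unfolding prefix_sum_weight_def by (intro sum_strict_mono_ex1) (auto simp: dom)
qed

section \<open>Chains of P and the bounce path\<close>

lemma nuio_mono:
  assumes "nuio n m" "1 \<le> i" "i \<le> j" "j \<le> n - 1"
  shows "m i \<le> m j"
  using assms(3,4)
proof (induction j rule: dec_induct)
  case (step k)
  then have "m k \<le> m (Suc k)"
    using assms(1,2) unfolding nuio_def by auto
  with step show ?case by simp
qed simp

abbreviation bounce_point :: "nat \<Rightarrow> (nat \<Rightarrow> nat) \<Rightarrow> nat \<Rightarrow> nat" where
  "bounce_point n m k \<equiv> (bounce_step n m ^^ k) 0"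

lemma bounce_step_le: "nuio n m \<Longrightarrow> b \<le> n \<Longrightarrow> bounce_step n m b \<le> n"
  unfolding nuio_def bounce_step_def by auto

lemma bounce_step_gt: "nuio n m \<Longrightarrow> b < n \<Longrightarrow> b < bounce_step n m b"
  unfolding nuio_def bounce_step_def by (auto simp: Suc_le_eq)

lemma bounce_step_self: "bounce_step n m n = n"
  unfolding bounce_step_def by auto

lemma bounce_point_le: "nuio n m \<Longrightarrow> bounce_point n m k \<le> n"
  by (induction k) (auto intro: bounce_step_le)

lemma bounce_point_ge: "nuio n m \<Longrightarrow> min k n \<le> bounce_point n m k"
proof (induction k)
  case (Suc k)
  show ?case
  proof (cases "bounce_point n m k = n")
    case True
    then show ?thesis by (simp add: bounce_step_self)
  next
    case False
    then have "bounce_point n m k < bounce_point n m (Suc k)"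
      using bounce_point_le[OF Suc.prems, of k] bounce_step_gt[OF Suc.prems] by simp
    with Suc show ?thesis by simp
  qed
qed simp

lemma bounce_point_bounce_number: "nuio n m \<Longrightarrow> bounce_point n m (bounce_number n m) = n"
  unfolding bounce_number_def
  by (rule LeastI[of _ n]) (use bounce_point_ge[of n m n] bounce_point_le[of n m n] in simp)

lemma bounce_block_exists:
  assumes nu: "nuio n m" and v: "v \<in> {1..n}"
  obtains k where "k < bounce_number n m" "bounce_point n m k < v"
    "v \<le> bounce_point n m (Suc k)"
proof -
  define j where "j = (LEAST j. v \<le> bounce_point n m j)"
  have reach: "v \<le> bounce_point n m (bounce_number n m)"
    using bounce_point_bounce_number[OF nu] v by simp
  have "v \<le> bounce_point n m j" "j \<le> bounce_number n m"
    unfolding j_def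
    by (rule LeastI[where P = "\<lambda>j. v \<le> bounce_point n m j", OF reach],
        rule Least_le[where P = "\<lambda>j. v \<le> bounce_point n m j", OF reach])
  moreover have "j \<noteq> 0"
    using \<open>v \<le> bounce_point n m j\<close> v by (cases j) auto
  moreover have "\<not> v \<le> bounce_point n m (j - 1)"
    unfolding j_def by (rule not_less_Least) (use \<open>j \<noteq> 0\<close> j_def in simp)
  ultimately show ?thesis
    using that[of "j - 1"] by simp
qed

lemma inc_edge_in_bounce_block:
  assumes nu: "nuio n m" and "bounce_point n m k < u" "u < v"
    and "v \<le> bounce_point n m (Suc k)"
  shows "inc_edge n m u v"
proof -
  let ?b = "bounce_point n m k"
  have "v \<le> n"
    using assms(4) bounce_point_le[OF nu] le_trans by blast
  have "?b + 1 \<le> n - 1"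
    using assms(2-4) \<open>v \<le> n\<close> by (auto simp: bounce_step_def split: if_splits)
  then have "bounce_point n m (Suc k) = m (?b + 1)"
    by (simp add: bounce_step_def)
  also have "\<dots> \<le> m u"
    by (rule nuio_mono[OF nu]) (use assms(2,3) \<open>v \<le> n\<close> in auto)
  finally show ?thesis
    using assms(2-4) \<open>v \<le> n\<close> unfolding inc_edge_def by auto
qed

lemma independent_card_le_bounce_number:
  assumes nu: "nuio n m" and S: "S \<subseteq> {1..n}"
    and indep: "\<And>u v. u \<in> S \<Longrightarrow> v \<in> S \<Longrightarrow> \<not> inc_edge n m u v"
  shows "card S \<le> bounce_number n m"
proof -
  have "\<forall>v\<in>{1..n}. \<exists>k. k < bounce_number n m \<and>
      bounce_point n m k < v \<and> v \<le> bounce_point n m (Suc k)"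
    using bounce_block_exists[OF nu] by blast
  from bchoice[OF this] obtain f where f: "\<And>v. v \<in> {1..n} \<Longrightarrow> f v < bounce_number n m \<and>
      bounce_point n m (f v) < v \<and> v \<le> bounce_point n m (Suc (f v))"
    by blast
  have "inj_on f S"
  proof (rule linorder_inj_onI)
    fix u v assume "u < v" "u \<in> S" "v \<in> S"
    then have "u \<in> {1..n}" "v \<in> {1..n}" "\<not> inc_edge n m u v"
      using S indep by auto
    then show "f u \<noteq> f v"
      using inc_edge_in_bounce_block[OF nu, of "f v" u v] f[of u] f[of v] \<open>u < v\<close> by auto
  qed auto
  then have "card S \<le> card {..<bounce_number n m}"
    by (rule card_inj_on_le) (use f S in auto)
  then show ?thesis by simp
qed

lemma chrom_coeff_eq_0_if_large_colour_class:
  assumes "nuio n m" and "\<alpha> 1 > bounce_number n m"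
  shows "chrom_coeff n m \<alpha> k = 0"
proof -
  have "\<not> proper_coloring n m \<kappa>" if "\<forall>c. card {v\<in>{1..n}. \<kappa> v = c} = \<alpha> c" for \<kappa>
  proof
    assume "proper_coloring n m \<kappa>"
    then have "card {v\<in>{1..n}. \<kappa> v = 1} \<le> bounce_number n m"
      unfolding proper_coloring_def
      by (intro independent_card_le_bounce_number[OF assms(1)]) force+
    then show False
      using that assms(2) by simp
  qed
  then have "{\<kappa>. proper_coloring n m \<kappa> \<and>
      (\<forall>c. card {v\<in>{1..n}. \<kappa> v = c} = \<alpha> c) \<and> asc n m \<kappa> = k} = {}"
    by blast
  then show ?thesis
    unfolding chrom_coeff_def by (simp only: card.empty)
qed

section \<open>Kostka numbers\<close>

text \<open>The exponent vector of x^\<mu> = x_1^\<mu>_1 x_2^\<mu>_2 ..., colours being numbered from 1.\<close>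
definition partition_weight :: "nat list \<Rightarrow> nat \<Rightarrow> nat" where
  "partition_weight mu c = (if 1 \<le> c \<and> c \<le> length mu then mu ! (c - 1) else 0)"

lemma partition_weight_1: "mu \<noteq> [] \<Longrightarrow> partition_weight mu 1 = hd mu"
  unfolding partition_weight_def by (cases mu) auto

lemma sum_partition_weight: "(\<Sum>c\<in>{1..i}. partition_weight mu c) = sum_list (take i mu)"
  by (induction i) (auto simp: partition_weight_def take_Suc_conv_app_nth)

lemma finite_cells: "finite (cells la)"
proof -
  have "cells la = Sigma {..<length la} (\<lambda>r. {..<la ! r})"
    unfolding cells_def by auto
  then show ?thesis by simp
qed

lemma card_cells_in_first_rows:
  "card {(r, j) \<in> cells la. r < i} = sum_list (take i la)"
proof -
  have "{(r, j) \<in> cells la. r < i} = Sigma {..<min i (length la)} (\<lambda>r. {..<la ! r})"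
    unfolding cells_def by auto
  then have "card {(r, j) \<in> cells la. r < i} = (\<Sum>r<min i (length la). la ! r)"
    by simp
  also have "\<dots> = sum_list (take i la)"
    by (simp add: sum_list_sum_nth atLeast0LessThan min.commute)
  finally show ?thesis .
qed

lemma cell_above:
  assumes "sorted_wrt (\<ge>) la" "(Suc r, j) \<in> cells la"
  shows "(r, j) \<in> cells la"
  using assms sorted_wrt_nth_less[OF assms(1), of r "Suc r"] unfolding cells_def by auto

lemma ssyt_row_lt_entry:
  assumes "ssyt la T" "sorted_wrt (\<ge>) la" "(r, j) \<in> cells la"
  shows "r < T (r, j)"
  using assms(3)
proof (induction r)
  case 0
  then show ?case using assms(1) unfolding ssyt_def by fastforce
next
  case (Suc r)
  then have "r < T (r, j)"
    using cell_above[OF assms(2)] by blast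
  moreover have "T (r, j) < T (Suc r, j)"
    using assms(1) Suc.prems unfolding ssyt_def by blast
  ultimately show ?case by simp
qed

lemma sum_card_fibres_atLeastAtMost:
  assumes "finite A"
  shows "(\<Sum>c\<in>{1..i}. card {x\<in>A. T x = (c::nat)}) = card {x\<in>A. T x \<in> {1..i}}"
proof (induction i)
  case (Suc i)
  have "{x\<in>A. T x \<in> {1..Suc i}} = {x\<in>A. T x \<in> {1..i}} \<union> {x\<in>A. T x = Suc i}"
    by auto
  moreover have "card ({x\<in>A. T x \<in> {1..i}} \<union> {x\<in>A. T x = Suc i}) =
      card {x\<in>A. T x \<in> {1..i}} + card {x\<in>A. T x = Suc i}"
    by (rule card_Un_disjoint) (use assms in auto)
  ultimately show ?case using Suc by simp
qed simp

text \<open>Entries at most i of a semistandard tableau lie in its first i rows.\<close>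
lemma schur_coeff_nonzero_imp_dominates:
  assumes la: "sorted_wrt (\<ge>) la" and "schur_coeff la (partition_weight mu) \<noteq> 0"
  shows "sum_list (take i mu) \<le> sum_list (take i la)"
proof -
  have "{T. ssyt la T \<and> (\<forall>c. card {x\<in>cells la. T x = c} = partition_weight mu c)} \<noteq> {}"
    using assms(2) unfolding schur_coeff_def by (metis card.empty)
  then obtain T where T: "ssyt la T" and content:
      "\<And>c. card {x\<in>cells la. T x = c} = partition_weight mu c"
    by blast
  have "sum_list (take i mu) = (\<Sum>c\<in>{1..i}. card {x\<in>cells la. T x = c})"
    using sum_partition_weight[of mu i] by (simp add: content)
  also have "\<dots> = card {x\<in>cells la. T x \<in> {1..i}}"
    by (rule sum_card_fibres_atLeastAtMost[OF finite_cells])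
  also have "\<dots> \<le> card {(r, j) \<in> cells la. r < i}"
  proof (rule card_mono)
    show "finite {(r, j) \<in> cells la. r < i}"
      by (rule finite_subset[OF _ finite_cells[of la]]) auto
    show "{x\<in>cells la. T x \<in> {1..i}} \<subseteq> {(r, j) \<in> cells la. r < i}"
      using ssyt_row_lt_entry[OF T la] by fastforce
  qed
  also have "\<dots> = sum_list (take i la)"
    by (rule card_cells_in_first_rows)
  finally show ?thesis .
qed

definition row_tableau :: "nat list \<Rightarrow> nat \<times> nat \<Rightarrow> nat" where
  "row_tableau mu = (\<lambda>x. if x \<in> cells mu then fst x + 1 else undefined)"

lemma ssyt_row_tableau:
  assumes "sorted_wrt (\<ge>) mu"
  shows "ssyt mu (row_tableau mu)"
  unfolding ssyt_def
proof (intro conjI allI impI ballI)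
  show "row_tableau mu \<in> cells mu \<rightarrow>\<^sub>E UNIV"
    unfolding row_tableau_def by auto
  show "row_tableau mu (i, j) \<le> row_tableau mu (i, Suc j)" if "(i, Suc j) \<in> cells mu" for i j
    using that unfolding row_tableau_def cells_def by auto
  show "row_tableau mu (i, j) < row_tableau mu (Suc i, j)" if "(Suc i, j) \<in> cells mu" for i j
    using that cell_above[OF assms that] unfolding row_tableau_def by simp
qed (simp add: row_tableau_def)

lemma content_row_tableau:
  "card {x\<in>cells mu. row_tableau mu x = c} = partition_weight mu c"
proof (cases "1 \<le> c \<and> c \<le> length mu")
  case True
  then have "{x\<in>cells mu. row_tableau mu x = c} = {c - 1} \<times> {..<mu ! (c - 1)}"
    unfolding row_tableau_def cells_def by auto
  then show ?thesis using True by (simp add: partition_weight_def)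
next
  case False
  then have "{x\<in>cells mu. row_tableau mu x = c} = {}"
    unfolding row_tableau_def cells_def by auto
  moreover have "partition_weight mu c = 0"
    using False unfolding partition_weight_def by auto
  ultimately show ?thesis by (simp only: card.empty)
qed

lemma schur_coeff_self_nonzero:
  assumes "sorted_wrt (\<ge>) mu"
  shows "schur_coeff mu (partition_weight mu) \<noteq> 0"
proof -
  let ?S = "{T. ssyt mu T \<and> (\<forall>c. card {x\<in>cells mu. T x = c} = partition_weight mu c)}"
  have "row_tableau mu \<in> ?S"
    using ssyt_row_tableau[OF assms] content_row_tableau by blast
  moreover have "?S \<subseteq> cells mu \<rightarrow>\<^sub>E {1..length mu}"
  proof (intro subsetI PiE_I)
    fix T x assume T: "T \<in> ?S" and x: "x \<in> cells mu"
    have "0 < card {y\<in>cells mu. T y = T x}"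
      unfolding card_gt_0_iff using x finite_cells[of mu] by (cases x) auto
    then show "T x \<in> {1..length mu}"
      using T by (auto simp: partition_weight_def split: if_splits)
  next
    fix T x assume "T \<in> ?S" "x \<notin> cells mu"
    then show "T x = undefined" by (auto simp: ssyt_def)
  qed
  then have "finite ?S"
    by (rule finite_subset) (simp add: finite_PiE finite_cells)
  ultimately show ?thesis
    unfolding schur_coeff_def by (auto simp: card_eq_0_iff)
qed

lemma schur_coeff_nonzero_imp_hd_le:
  assumes "is_partition_of n la" "is_partition_of n mu"
    and "schur_coeff la (partition_weight mu) \<noteq> 0"
  shows "hd mu \<le> hd la"
proof (cases "n = 0")
  case False
  then have "la \<noteq> []" "mu \<noteq> []"
    using assms(1,2) partition_eq_Nil_iff by metis+
  moreover have "sum_list (take 1 mu) \<le> sum_list (take 1 la)"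
    using schur_coeff_nonzero_imp_dominates assms by (simp add: is_partition_of_def)
  ultimately show ?thesis
    by (cases la; cases mu) auto
next
  case True
  then have "la = mu"
    using assms(1,2) partition_eq_Nil_iff by metis
  then show ?thesis by simp
qed

lemma schur_coeff_nonzero_imp_prefix_sum_weight_less:
  assumes "is_partition_of n la" "is_partition_of n mu" "la \<noteq> mu"
    and "schur_coeff la (partition_weight mu) \<noteq> 0"
  shows "prefix_sum_weight n mu < prefix_sum_weight n la"
  using assms schur_coeff_nonzero_imp_dominates
  by (intro prefix_sum_weight_strict_mono) (auto simp: is_partition_of_def)

lemma schur_expansion_coeff_eq_0_if_long_first_row:
  fixes c :: "nat list \<Rightarrow> int"
  assumes expansion: "\<And>mu. is_partition_of n mu \<Longrightarrow> hd mu > r \<Longrightarrow>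
      (\<Sum>la\<in>{la. is_partition_of n la}. c la * int (schur_coeff la (partition_weight mu))) = 0"
    and "is_partition_of n mu" and "hd mu > r"
  shows "c mu = 0"
proof (rule ccontr)
  let ?P = "{la. is_partition_of n la}"
  define Bad where "Bad = {nu \<in> ?P. hd nu > r \<and> c nu \<noteq> 0}"
  assume "c mu \<noteq> 0"
  with assms(2,3) have "mu \<in> Bad"
    by (simp add: Bad_def)
  have "finite Bad"
    using finite_partitions[of n] by (simp add: Bad_def)
  have "Max (prefix_sum_weight n ` Bad) \<in> prefix_sum_weight n ` Bad"
    using \<open>finite Bad\<close> \<open>mu \<in> Bad\<close> by (intro Max_in) auto
  then obtain nu where nu: "nu \<in> Bad"
    and nu_max: "prefix_sum_weight n nu = Max (prefix_sum_weight n ` Bad)"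
    by (metis imageE)
  have maximal: "prefix_sum_weight n la \<le> prefix_sum_weight n nu" if "la \<in> Bad" for la
    unfolding nu_max using \<open>finite Bad\<close> that by simp
  have nu_part: "is_partition_of n nu" "hd nu > r"
    using nu by (simp_all add: Bad_def)
  have others: "c la * int (schur_coeff la (partition_weight nu)) = 0" if la: "la \<in> ?P - {nu}"
    for la
  proof (cases "schur_coeff la (partition_weight nu) = 0")
    case False
    with la nu_part have "hd la > r" "prefix_sum_weight n nu < prefix_sum_weight n la"
      using schur_coeff_nonzero_imp_hd_le schur_coeff_nonzero_imp_prefix_sum_weight_less
      by (fastforce, blast)
    then show ?thesis
      using maximal[of la] la by (fastforce simp: Bad_def)
  qed simp
  have "0 = (\<Sum>la\<in>?P. c la * int (schur_coeff la (partition_weight nu)))"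
    using expansion nu_part by simp
  also have "\<dots> = c nu * int (schur_coeff nu (partition_weight nu))
      + (\<Sum>la\<in>?P - {nu}. c la * int (schur_coeff la (partition_weight nu)))"
    by (rule sum.remove[OF finite_partitions]) (use nu_part in simp)
  also have "(\<Sum>la\<in>?P - {nu}. c la * int (schur_coeff la (partition_weight nu))) = 0"
    using others by (intro sum.neutral) blast
  finally have "c nu * int (schur_coeff nu (partition_weight nu)) = 0"
    by simp
  moreover have "schur_coeff nu (partition_weight nu) \<noteq> 0"
    using schur_coeff_self_nonzero nu_part(1) by (simp add: is_partition_of_def)
  moreover have "c nu \<noteq> 0"
    using nu by (simp add: Bad_def)
  ultimately show False
    by simp
qed

theorem lemma2p16:
  fixes n :: nat and m :: "nat \<Rightarrow> nat" and B :: "nat list \<Rightarrow> int poly"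
  assumes "nuio n m"
    and "\<forall>\<alpha> k. int (chrom_coeff n m \<alpha> k) =
           (\<Sum>la\<in>{la. is_partition_of n la}. coeff (B la) k * int (schur_coeff la \<alpha>))"
  shows "\<forall>la. is_partition_of n la \<and> hd la > bounce_number n m \<longrightarrow> B la = 0"
proof (intro allI impI)
  fix la assume la: "is_partition_of n la \<and> hd la > bounce_number n m"
  have "coeff (B la) k = 0" for k
  proof (rule schur_expansion_coeff_eq_0_if_long_first_row)
    fix mu assume mu: "is_partition_of n mu" "hd mu > bounce_number n m"
    have "mu \<noteq> []"
      using mu(1) partition_eq_Nil_iff assms(1) by (auto simp: nuio_def)
    then have "partition_weight mu 1 > bounce_number n m"
      using mu(2) partition_weight_1[OF \<open>mu \<noteq> []\<close>] by simp
    then have "chrom_coeff n m (partition_weight mu) k = 0"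
      by (rule chrom_coeff_eq_0_if_large_colour_class[OF assms(1)])
    then show "(\<Sum>la'\<in>{la. is_partition_of n la}.
        coeff (B la') k * int (schur_coeff la' (partition_weight mu))) = 0"
      using assms(2) by (metis of_nat_0)
  qed (use la in auto)
  then show "B la = 0"
    by (simp add: poly_eq_iff)
qed

end
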